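(* For $(c,d)\in\mathbb{C}\times\mathbb{C}^*$ let $f_{c,d}(z) = 1 + \frac cz + \frac d{z^2}$, with critical points $0$ and $-2d/c$ ($=\infty$ when $c=0$), and identify $(c,d)$ with $[c:d:1]\in\mathbb{CP}^2$. Let $\mathcal{X}_n$ be the set of $(c,d)\in\mathbb{C}\times\mathbb{C}^*$ such that $0$ is periodic under $f_{c,d}$ with period dividing $n$, and $\mathcal{Y}_m$ the set of $(c,d)\in\mathbb{C}\times\mathbb{C}^*$ such that $-2d/c$ is periodic under $f_{c,d}$ with period dividing $m$, with closures $\overline{\mathcal{X}_n}$, $\overline{\mathcal{Y}_m}$ in $\mathbb{CP}^2$. Then for all $n\ge 3$ and $m\ge 1$, \[ \overline{\mathcal{X}_n}\cap\overline{\mathcal{Y}_m}\cap\{[c:d:0] \in \mathbb{CP}^2\} = \emptyset. \] *)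

theory Defs
  imports "HOL-Analysis.Analysis"
begin

text \<open>The Riemann sphere is modelled as complex option, None being infinity.
  fmap c d is f_{c,d}(z) = 1 + c/z + d/z^2 extended to the sphere
  (f(infinity) = 1, f(0) = infinity, which is correct since d is nonzero).\<close>

fun fmap :: "complex \<Rightarrow> complex \<Rightarrow> complex option \<Rightarrow> complex option" where
  "fmap c d None = Some 1"
| "fmap c d (Some z) = (if z = 0 then None else Some (1 + c / z + d / z^2))"

definition crit2 :: "complex \<Rightarrow> complex \<Rightarrow> complex option" where
  "crit2 c d = (if c = 0 then None else Some (-2 * d / c))"

definition Xset :: "nat \<Rightarrow> (complex \<times> complex) set" where
  "Xset n = {(c, d). d \<noteq> 0 \<and> (fmap c d ^^ n) (Some 0) = Some 0}"

definition Yset :: "nat \<Rightarrow> (complex \<times> complex) set" where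
  "Yset m = {(c, d). d \<noteq> 0 \<and> (fmap c d ^^ m) (crit2 c d) = crit2 c d}"

text \<open>Closure in CP^2 of a subset S of the affine chart (c,d) = [c:d:1]:
  the projective point with homogeneous coordinates v (nonzero) lies in the closure
  iff some sequence of points of S converges to it in CP^2, i.e. iff suitable
  rescaled lifts [s_k c_k : s_k d_k : s_k] converge to v in C^3.\<close>
definition in_proj_closure :: "(complex \<times> complex) set \<Rightarrow> complex \<times> complex \<times> complex \<Rightarrow> bool" where
  "in_proj_closure S v \<longleftrightarrow> v \<noteq> 0 \<and>
     (\<exists>u :: nat \<Rightarrow> complex \<times> complex. \<exists>s :: nat \<Rightarrow> complex.
        (\<forall>k. u k \<in> S \<and> s k \<noteq> 0) \<and>
        (\<lambda>k. (s k * fst (u k), s k * snd (u k), s k)) \<longlonglongrightarrow> v)"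

end

theory Submission
  imports Defs
begin

(* When [c:d:1] tends to [a:b:0], write c = a/s, d = b/s with s -> 0. A point z away from 0 is
   sent by f to infinity at rate 1/s, f(z) ~ h(z)/s with h(z) = a/z + b/z^2, and that point is
   sent back to the finite point g(z) = 1 + a/h(z). So as long as the orbit of the limiting map
   g avoids 0 and the zeros of h, the even iterates of f converge to those of g while the odd
   ones escape to infinity; so a periodicity relation of f with finite endpoints can only
   persist in the limit as an even one, and then becomes a relation for g. In the coordinate u
   = az/b the map g reads u |-> u + 1/(u+1) + a/b - 1, so Re u increases on Re u > 0 when
   Re(a/b) >= 1 and decreases on Re u < -1 when Re(a/b) < 1. In the first case the orbit of the
   critical value 1 never reaches the critical point 0; in the second the critical point -2b/a
   is not periodic. *)

definition blowup_map :: "complex \<Rightarrow> complex \<Rightarrow> complex \<Rightarrow> complex" where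
  "blowup_map a b z = a / z + b / z^2"

definition return_map :: "complex \<Rightarrow> complex \<Rightarrow> complex \<Rightarrow> complex" where
  "return_map a b z = 1 + a / blowup_map a b z"

definition regular :: "complex \<Rightarrow> complex \<Rightarrow> complex \<Rightarrow> bool" where
  "regular a b z \<longleftrightarrow> z \<noteq> 0 \<and> blowup_map a b z \<noteq> 0"

locale degenerating_params =
  fixes C D s :: "nat \<Rightarrow> complex" and a b :: complex
  assumes scale_nonzero: "\<And>k. s k \<noteq> 0"
    and scale_tendsto: "s \<longlonglongrightarrow> 0"
    and C_tendsto: "(\<lambda>k. s k * C k) \<longlonglongrightarrow> a"
    and D_tendsto: "(\<lambda>k. s k * D k) \<longlonglongrightarrow> b"
begin

lemma fmap_finite_tendsto_infinity:
  assumes y: "y \<longlonglongrightarrow> \<zeta>" and \<zeta>: "\<zeta> \<noteq> 0"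
  obtains w where "\<forall>\<^sub>F k in sequentially. fmap (C k) (D k) (Some (y k)) = Some (w k)"
    and "(\<lambda>k. s k * w k) \<longlonglongrightarrow> blowup_map a b \<zeta>"
proof
  define w where "w k = 1 + C k / y k + D k / (y k)^2" for k
  show "\<forall>\<^sub>F k in sequentially. fmap (C k) (D k) (Some (y k)) = Some (w k)"
    using tendsto_imp_eventually_ne[OF y \<zeta>] by eventually_elim (simp add: w_def)
  have "(\<lambda>k. s k + (s k * C k) / y k + (s k * D k) / (y k)^2) \<longlonglongrightarrow> 0 + a / \<zeta> + b / \<zeta>^2"
    by (intro tendsto_intros scale_tendsto C_tendsto D_tendsto y) (use \<zeta> in auto)
  then show "(\<lambda>k. s k * w k) \<longlonglongrightarrow> blowup_map a b \<zeta>"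
    by (simp add: w_def blowup_map_def algebra_simps)
qed

lemma fmap_infinity_tendsto_finite:
  assumes w: "(\<lambda>k. s k * w k) \<longlonglongrightarrow> \<eta>" and \<eta>: "\<eta> \<noteq> 0"
  obtains y where "\<forall>\<^sub>F k in sequentially. fmap (C k) (D k) (Some (w k)) = Some (y k)"
    and "y \<longlonglongrightarrow> 1 + a / \<eta>"
proof
  define y where "y k = 1 + C k / w k + D k / (w k)^2" for k
  show "\<forall>\<^sub>F k in sequentially. fmap (C k) (D k) (Some (w k)) = Some (y k)"
    using tendsto_imp_eventually_ne[OF w \<eta>] by eventually_elim (simp add: y_def)
  have "(\<lambda>k. 1 + (s k * C k) / (s k * w k) + s k * ((s k * D k) / (s k * w k)^2))
          \<longlonglongrightarrow> 1 + a / \<eta> + 0 * (b / \<eta>^2)"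
    by (intro tendsto_intros scale_tendsto C_tendsto D_tendsto w) (use \<eta> in auto)
  moreover have "1 + (s k * C k) / (s k * w k) + s k * ((s k * D k) / (s k * w k)^2) = y k" for k
    using scale_nonzero[of k] by (cases "w k = 0") (auto simp: y_def field_simps power2_eq_square)
  ultimately show "y \<longlonglongrightarrow> 1 + a / \<eta>"
    by simp
qed

context
  fixes z :: "nat \<Rightarrow> complex" and \<zeta> :: complex
  assumes z_tendsto: "z \<longlonglongrightarrow> \<zeta>"
    and regular_orbit: "\<And>j. regular a b ((return_map a b ^^ j) \<zeta>)"
begin

lemma even_iterate_tendsto:
  "\<exists>y. (\<forall>\<^sub>F k in sequentially. (fmap (C k) (D k) ^^ (2 * j)) (Some (z k)) = Some (y k))
      \<and> y \<longlonglongrightarrow> (return_map a b ^^ j) \<zeta>"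
proof (induction j)
  case 0
  show ?case
    using z_tendsto by (intro exI[of _ z]) simp
next
  case (Suc j)
  then obtain y where y_eq: "\<forall>\<^sub>F k in sequentially. (fmap (C k) (D k) ^^ (2 * j)) (Some (z k)) = Some (y k)"
    and y: "y \<longlonglongrightarrow> (return_map a b ^^ j) \<zeta>"
    by blast
  obtain w where w_eq: "\<forall>\<^sub>F k in sequentially. fmap (C k) (D k) (Some (y k)) = Some (w k)"
    and w: "(\<lambda>k. s k * w k) \<longlonglongrightarrow> blowup_map a b ((return_map a b ^^ j) \<zeta>)"
    using fmap_finite_tendsto_infinity[OF y] regular_orbit[of j] by (auto simp: regular_def)
  obtain y' where y'_eq: "\<forall>\<^sub>F k in sequentially. fmap (C k) (D k) (Some (w k)) = Some (y' k)"
    and y': "y' \<longlonglongrightarrow> (return_map a b ^^ Suc j) \<zeta>"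
    using fmap_infinity_tendsto_finite[OF w] regular_orbit[of j] by (auto simp: regular_def return_map_def)
  have "\<forall>\<^sub>F k in sequentially. (fmap (C k) (D k) ^^ (2 * Suc j)) (Some (z k)) = Some (y' k)"
    using y_eq w_eq y'_eq by eventually_elim simp
  with y' show ?case
    by blast
qed

lemma odd_iterate_tendsto_infinity:
  "\<exists>w. (\<forall>\<^sub>F k in sequentially. (fmap (C k) (D k) ^^ (2 * j + 1)) (Some (z k)) = Some (w k))
      \<and> (\<lambda>k. s k * w k) \<longlonglongrightarrow> blowup_map a b ((return_map a b ^^ j) \<zeta>)"
proof -
  obtain y where y_eq: "\<forall>\<^sub>F k in sequentially. (fmap (C k) (D k) ^^ (2 * j)) (Some (z k)) = Some (y k)"
    and y: "y \<longlonglongrightarrow> (return_map a b ^^ j) \<zeta>"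
    using even_iterate_tendsto by blast
  obtain w where w_eq: "\<forall>\<^sub>F k in sequentially. fmap (C k) (D k) (Some (y k)) = Some (w k)"
    and w: "(\<lambda>k. s k * w k) \<longlonglongrightarrow> blowup_map a b ((return_map a b ^^ j) \<zeta>)"
    using fmap_finite_tendsto_infinity[OF y] regular_orbit[of j] by (auto simp: regular_def)
  have "\<forall>\<^sub>F k in sequentially. (fmap (C k) (D k) ^^ (2 * j + 1)) (Some (z k)) = Some (w k)"
    using y_eq w_eq by eventually_elim simp
  with w show ?thesis
    by blast
qed

lemma finite_return_limit:
  assumes z'_tendsto: "z' \<longlonglongrightarrow> \<zeta>'"
    and return: "\<forall>\<^sub>F k in sequentially. (fmap (C k) (D k) ^^ n) (Some (z k)) = Some (z' k)"
  shows "even n \<and> \<zeta>' = (return_map a b ^^ (n div 2)) \<zeta>"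
proof -
  have "even n"
  proof (rule ccontr)
    assume "odd n"
    then obtain j where n: "n = 2 * j + 1"
      by (rule oddE)
    obtain w where w_eq: "\<forall>\<^sub>F k in sequentially. (fmap (C k) (D k) ^^ n) (Some (z k)) = Some (w k)"
      and w: "(\<lambda>k. s k * w k) \<longlonglongrightarrow> blowup_map a b ((return_map a b ^^ j) \<zeta>)"
      using odd_iterate_tendsto_infinity n by blast
    have "\<forall>\<^sub>F k in sequentially. s k * w k = s k * z' k"
      using w_eq return by eventually_elim simp
    with w have "(\<lambda>k. s k * z' k) \<longlonglongrightarrow> blowup_map a b ((return_map a b ^^ j) \<zeta>)"
      by (simp add: tendsto_cong)
    moreover have "(\<lambda>k. s k * z' k) \<longlonglongrightarrow> 0 * \<zeta>'"
      by (intro tendsto_intros scale_tendsto z'_tendsto)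
    ultimately have "blowup_map a b ((return_map a b ^^ j) \<zeta>) = 0"
      using LIMSEQ_unique by fastforce
    with regular_orbit[of j] show False
      by (simp add: regular_def)
  qed
  then obtain j where n: "n = 2 * j"
    by (rule evenE)
  obtain y where y_eq: "\<forall>\<^sub>F k in sequentially. (fmap (C k) (D k) ^^ n) (Some (z k)) = Some (y k)"
    and y: "y \<longlonglongrightarrow> (return_map a b ^^ j) \<zeta>"
    using even_iterate_tendsto n by blast
  have "\<forall>\<^sub>F k in sequentially. y k = z' k"
    using y_eq return by eventually_elim simp
  with y have "z' \<longlonglongrightarrow> (return_map a b ^^ j) \<zeta>"
    by (simp add: tendsto_cong)
  with z'_tendsto have "\<zeta>' = (return_map a b ^^ j) \<zeta>"
    by (rule LIMSEQ_unique)
  with n \<open>even n\<close> show ?thesis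
    by simp
qed

end

end

lemma in_proj_closure_at_infinity:
  assumes "in_proj_closure S (a, b, 0)"
  obtains C D s where "\<And>k. (C k, D k) \<in> S" and "degenerating_params C D s a b"
proof -
  from assms obtain u s where u: "\<And>k. u k \<in> S" and s: "\<And>k. s k \<noteq> 0"
    and lim: "(\<lambda>k. (s k * fst (u k), s k * snd (u k), s k)) \<longlonglongrightarrow> (a, b, 0)"
    unfolding in_proj_closure_def by blast
  have "degenerating_params (\<lambda>k. fst (u k)) (\<lambda>k. snd (u k)) s a b"
    using s tendsto_fst[OF lim] tendsto_fst[OF tendsto_snd[OF lim]] tendsto_snd[OF tendsto_snd[OF lim]]
    by unfold_locales simp_all
  with u show thesis
    by (intro that) simp_all
qed

lemma not_in_proj_closure_Xset:
  assumes "n \<ge> 3" and regular_orbit: "\<And>j. regular a b ((return_map a b ^^ j) 1)"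
  shows "\<not> in_proj_closure (Xset n) (a, b, 0)"
proof
  assume "in_proj_closure (Xset n) (a, b, 0)"
  then obtain C D s where mem: "\<And>k. (C k, D k) \<in> Xset n" and params: "degenerating_params C D s a b"
    using in_proj_closure_at_infinity by blast
  interpret degenerating_params C D s a b
    by (fact params)
  have "(fmap (C k) (D k) ^^ (n - 2)) (Some 1) = Some 0" for k
  proof -
    have "n = Suc (Suc (n - 2))"
      using \<open>n \<ge> 3\<close> by simp
    then have "(fmap (C k) (D k) ^^ n) (Some 0) = (fmap (C k) (D k) ^^ (n - 2)) (Some 1)"
      by (metis comp_apply fmap.simps funpow_Suc_right)
    with mem[of k] show ?thesis
      by (simp add: Xset_def)
  qed
  then have "0 = (return_map a b ^^ ((n - 2) div 2)) 1"
    using finite_return_limit[of "\<lambda>_. 1" 1 "\<lambda>_. 0" 0 "n - 2", OF _ regular_orbit] by simp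
  with regular_orbit show False
    by (metis regular_def)
qed

lemma not_in_proj_closure_Yset:
  assumes "m \<ge> 1" and "a \<noteq> 0"
    and regular_orbit: "\<And>j. regular a b ((return_map a b ^^ j) (-2 * b / a))"
    and aperiodic: "\<And>j. j \<ge> 1 \<Longrightarrow> (return_map a b ^^ j) (-2 * b / a) \<noteq> -2 * b / a"
  shows "\<not> in_proj_closure (Yset m) (a, b, 0)"
proof
  assume "in_proj_closure (Yset m) (a, b, 0)"
  then obtain C D s where mem: "\<And>k. (C k, D k) \<in> Yset m" and params: "degenerating_params C D s a b"
    using in_proj_closure_at_infinity by blast
  interpret degenerating_params C D s a b
    by (fact params)
  define p where "p = (\<lambda>k. -2 * D k / C k)"
  have "(\<lambda>k. -2 * (s k * D k) / (s k * C k)) \<longlonglongrightarrow> -2 * b / a"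
    by (intro tendsto_intros C_tendsto D_tendsto) (use \<open>a \<noteq> 0\<close> in auto)
  then have p: "p \<longlonglongrightarrow> -2 * b / a"
    using scale_nonzero by (simp add: p_def)
  have "\<forall>\<^sub>F k in sequentially. (fmap (C k) (D k) ^^ m) (Some (p k)) = Some (p k)"
    using tendsto_imp_eventually_ne[OF C_tendsto \<open>a \<noteq> 0\<close>]
  proof eventually_elim
    case (elim k)
    then have "crit2 (C k) (D k) = Some (p k)"
      by (simp add: crit2_def p_def)
    with mem[of k] show ?case
      by (simp add: Yset_def)
  qed
  then have "even m \<and> -2 * b / a = (return_map a b ^^ (m div 2)) (-2 * b / a)"
    using finite_return_limit[OF p regular_orbit p] by blast
  with \<open>m \<ge> 1\<close> aperiodic[of "m div 2"] show False
    by (auto elim: evenE)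
qed

lemma blowup_map_eq: "z \<noteq> 0 \<Longrightarrow> blowup_map a b z = (a * z + b) / z^2"
  by (simp add: blowup_map_def field_simps power2_eq_square)

lemma regularI:
  assumes "b \<noteq> 0" and "a * z / b \<noteq> 0" and "a * z / b \<noteq> -1"
  shows "regular a b z"
proof -
  have "z \<noteq> 0"
    using assms(2) by auto
  moreover have "a * z + b \<noteq> 0"
    using assms(1,3) by (auto simp: field_simps add_eq_0_iff)
  ultimately show ?thesis
    by (simp add: regular_def blowup_map_eq)
qed

lemma return_map_conj:
  assumes "b \<noteq> 0" and "regular a b z"
  shows "a * return_map a b z / b = a * z / b + inverse (a * z / b + 1) + a / b - 1"
proof -
  have "z \<noteq> 0" and "a * z + b \<noteq> 0"
    using assms(2) by (auto simp: regular_def blowup_map_eq)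
  moreover have "inverse (a * z / b + 1) = b / (a * z + b)"
    using assms(1) \<open>a * z + b \<noteq> 0\<close> by (simp add: field_simps)
  ultimately show ?thesis
    using assms(1) by (simp add: return_map_def blowup_map_eq divide_simps) algebra
qed

lemma Re_return_map_increasing:
  assumes "b \<noteq> 0" and "Re (a / b) \<ge> 1" and "Re (a * z / b) > 0"
  shows "Re (a * return_map a b z / b) > Re (a * z / b)"
proof -
  have "regular a b z"
    using assms by (intro regularI) auto
  moreover have "Re (inverse (a * z / b + 1)) > 0"
    using assms(3) by (simp add: add_pos_nonneg)
  ultimately show ?thesis
    using assms by (simp add: return_map_conj)
qed

lemma Re_return_map_decreasing:
  assumes "b \<noteq> 0" and "Re (a / b) < 1" and "Re (a * z / b) < -1"
  shows "Re (a * return_map a b z / b) < Re (a * z / b)"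
proof -
  have "regular a b z"
    using assms by (intro regularI) auto
  moreover have "Re (inverse (a * z / b + 1)) < 0"
    using assms(3) by (simp add: add_pos_nonneg divide_neg_pos)
  ultimately show ?thesis
    using assms by (simp add: return_map_conj)
qed

lemma regular_orbit_one:
  assumes "(a, b) \<noteq> (0, 0)" and "a = 0 \<or> b = 0 \<or> Re (a / b) \<ge> 1"
  shows "regular a b ((return_map a b ^^ j) 1)"
  using assms(2)
proof (elim disjE)
  assume "a = 0"
  then have "(return_map a b ^^ j) 1 = 1"
    by (induction j) (simp_all add: return_map_def)
  with \<open>a = 0\<close> assms(1) show ?thesis
    by (simp add: regular_def blowup_map_def)
next
  assume "b = 0"
  with assms(1) have "a \<noteq> 0"
    by simp
  have "Re ((return_map a b ^^ j) 1) \<ge> 1"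
  proof (induction j)
    case (Suc j)
    then have "(return_map a b ^^ j) 1 \<noteq> 0"
      by auto
    with \<open>b = 0\<close> \<open>a \<noteq> 0\<close> Suc show ?case
      by (simp add: return_map_def blowup_map_def)
  qed simp
  then have "(return_map a b ^^ j) 1 \<noteq> 0"
    by auto
  with \<open>b = 0\<close> \<open>a \<noteq> 0\<close> show ?thesis
    by (simp add: regular_def blowup_map_def)
next
  assume ab: "Re (a / b) \<ge> 1"
  then have "b \<noteq> 0"
    by auto
  have "Re (a * (return_map a b ^^ j) 1 / b) > 0"
  proof (induction j)
    case (Suc j)
    with Re_return_map_increasing[OF \<open>b \<noteq> 0\<close> ab Suc] show ?case
      by simp
  qed (use ab in simp)
  with \<open>b \<noteq> 0\<close> show ?thesis
    by (intro regularI) auto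
qed

context
  fixes a b :: complex
  assumes a: "a \<noteq> 0" and b: "b \<noteq> 0" and ab: "Re (a / b) < 1"
begin

lemma Re_crit_orbit_le: "Re (a * (return_map a b ^^ j) (-2 * b / a) / b) \<le> -2"
proof (induction j)
  case (Suc j)
  then show ?case
    using Re_return_map_decreasing[OF b ab, of "(return_map a b ^^ j) (-2 * b / a)"] by simp
qed (use a b in simp)

lemma Re_crit_orbit_less:
  assumes "j \<ge> 1"
  shows "Re (a * (return_map a b ^^ j) (-2 * b / a) / b) < -2"
proof -
  obtain i where "j = Suc i"
    using assms by (cases j) auto
  then show ?thesis
    using Re_return_map_decreasing[OF b ab, of "(return_map a b ^^ i) (-2 * b / a)"]
      Re_crit_orbit_le[of i] by simp
qed

lemma regular_crit_orbit: "regular a b ((return_map a b ^^ j) (-2 * b / a))"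
  using Re_crit_orbit_le[of j] b by (intro regularI) auto

lemma crit_orbit_aperiodic:
  assumes "j \<ge> 1"
  shows "(return_map a b ^^ j) (-2 * b / a) \<noteq> -2 * b / a"
  using Re_crit_orbit_less[OF assms] a b by auto

end

theorem lemma2p2:
  fixes n m :: nat and c d :: complex
  assumes "n \<ge> 3" and "m \<ge> 1" and "(c, d) \<noteq> (0, 0)"
  shows "\<not> (in_proj_closure (Xset n) (c, d, 0) \<and> in_proj_closure (Yset m) (c, d, 0))"
proof (cases "c = 0 \<or> d = 0 \<or> Re (c / d) \<ge> 1")
  case True
  then show ?thesis
    using not_in_proj_closure_Xset[OF \<open>n \<ge> 3\<close> regular_orbit_one[OF \<open>(c, d) \<noteq> (0, 0)\<close>]] by blast
next
  case False
  then have "c \<noteq> 0" and "d \<noteq> 0" and "Re (c / d) < 1"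
    by auto
  then show ?thesis
    using not_in_proj_closure_Yset[OF \<open>m \<ge> 1\<close> \<open>c \<noteq> 0\<close> regular_crit_orbit crit_orbit_aperiodic]
    by blast
qed

end
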